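(* Let $v$ be a flow on a surface $S$. Every circuit with wandering holonomy is not a periodic orbit, and it contains a point of $\Omega(v)-\overline{\mathrm{Cl}(v)}$.
   Context: Surface: 2-dimensional paracompact manifold. $\mathrm{Cl}(v)$ is the union of singular points and periodic orbits; $\Omega(v)$ the set of non-wandering points. A separatrix is a non-singular orbit whose $\alpha$- or $\omega$-limit set is a singular point. A non-trivial circuit is the image of an oriented circle under a continuous orientation-preserving map which is either a periodic orbit, or a directed graph (not a singleton) that is a union of separatrices and finitely many singular points. A circuit with wandering holonomy is a non-trivial circuit $\gamma$ for which there are a non-singular point $x\in\gamma$ and arbitrarily small open transverse arcs $I$ containing $x$ such that the (partially defined) first return map on $I$ is orientation-reversing, has nonempty domain, and its domain and image are disjoint. *)

theory Defs
  imports "HOL-Analysis.Analysis"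
begin

definition paracompact_space :: "'a topology \<Rightarrow> bool" where
  "paracompact_space S \<longleftrightarrow>
     (\<forall>\<U>. (\<forall>U\<in>\<U>. openin S U) \<and> \<Union>\<U> = topspace S \<longrightarrow>
        (\<exists>\<V>. (\<forall>V\<in>\<V>. openin S V) \<and> \<Union>\<V> = topspace S \<and>
              (\<forall>V\<in>\<V>. \<exists>U\<in>\<U>. V \<subseteq> U) \<and> locally_finite_in S \<V>))"

definition surface :: "'a topology \<Rightarrow> bool" where
  "surface S \<longleftrightarrow> Hausdorff_space S \<and> paracompact_space S \<and>
     (\<forall>x\<in>topspace S. \<exists>U. openin S U \<and> x \<in> U \<and>
        subtopology S U homeomorphic_space (euclidean :: (real^2) topology))"

definition flow :: "'a topology \<Rightarrow> (real \<Rightarrow> 'a \<Rightarrow> 'a) \<Rightarrow> bool" where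
  "flow S v \<longleftrightarrow>
     continuous_map (prod_topology euclideanreal S) S (\<lambda>(t, x). v t x) \<and>
     (\<forall>x\<in>topspace S. v 0 x = x) \<and>
     (\<forall>x\<in>topspace S. \<forall>s t. v (s + t) x = v s (v t x))"

definition orbit :: "(real \<Rightarrow> 'a \<Rightarrow> 'a) \<Rightarrow> 'a \<Rightarrow> 'a set" where
  "orbit v x = (\<lambda>t. v t x) ` UNIV"

definition singular_point :: "'a topology \<Rightarrow> (real \<Rightarrow> 'a \<Rightarrow> 'a) \<Rightarrow> 'a \<Rightarrow> bool" where
  "singular_point S v x \<longleftrightarrow> x \<in> topspace S \<and> (\<forall>t. v t x = x)"

definition periodic_point :: "'a topology \<Rightarrow> (real \<Rightarrow> 'a \<Rightarrow> 'a) \<Rightarrow> 'a \<Rightarrow> bool" where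
  "periodic_point S v x \<longleftrightarrow> x \<in> topspace S \<and> \<not> singular_point S v x \<and> (\<exists>T>0. v T x = x)"

definition periodic_orbit :: "'a topology \<Rightarrow> (real \<Rightarrow> 'a \<Rightarrow> 'a) \<Rightarrow> 'a set \<Rightarrow> bool" where
  "periodic_orbit S v Orb \<longleftrightarrow> (\<exists>x. periodic_point S v x \<and> Orb = orbit v x)"

definition Cl :: "'a topology \<Rightarrow> (real \<Rightarrow> 'a \<Rightarrow> 'a) \<Rightarrow> 'a set" where
  "Cl S v = {x. singular_point S v x \<or> periodic_point S v x}"

definition nonwandering :: "'a topology \<Rightarrow> (real \<Rightarrow> 'a \<Rightarrow> 'a) \<Rightarrow> 'a set" where
  "nonwandering S v = {x \<in> topspace S. \<forall>U. openin S U \<and> x \<in> U \<longrightarrow>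
       (\<forall>N. \<exists>t>N. \<exists>y\<in>U. v t y \<in> U)}"

definition omega_limit :: "'a topology \<Rightarrow> (real \<Rightarrow> 'a \<Rightarrow> 'a) \<Rightarrow> 'a \<Rightarrow> 'a set" where
  "omega_limit S v x = {y \<in> topspace S. \<forall>U. openin S U \<and> y \<in> U \<longrightarrow>
       (\<forall>T. \<exists>t\<ge>T. v t x \<in> U)}"

definition alpha_limit :: "'a topology \<Rightarrow> (real \<Rightarrow> 'a \<Rightarrow> 'a) \<Rightarrow> 'a \<Rightarrow> 'a set" where
  "alpha_limit S v x = {y \<in> topspace S. \<forall>U. openin S U \<and> y \<in> U \<longrightarrow>
       (\<forall>T. \<exists>t\<le>T. v t x \<in> U)}"

definition separatrix :: "'a topology \<Rightarrow> (real \<Rightarrow> 'a \<Rightarrow> 'a) \<Rightarrow> 'a set \<Rightarrow> bool" where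
  "separatrix S v Orb \<longleftrightarrow> (\<exists>x. x \<in> topspace S \<and> \<not> singular_point S v x \<and> Orb = orbit v x \<and>
       (\<exists>p. singular_point S v p \<and> (omega_limit S v x = {p} \<or> alpha_limit S v x = {p})))"

text \<open>A loop \<open>c\<close> (a 1-periodic continuous map from the reals, i.e. a map from the
  oriented circle) is orientation-preserving if near every parameter whose image is
  non-singular it runs along the flow in the positive direction.\<close>
definition orientation_preserving_loop ::
  "'a topology \<Rightarrow> (real \<Rightarrow> 'a \<Rightarrow> 'a) \<Rightarrow> (real \<Rightarrow> 'a) \<Rightarrow> bool" where
  "orientation_preserving_loop S v c \<longleftrightarrow>
     continuous_map euclideanreal S c \<and> (\<forall>s. c (s + 1) = c s) \<and>
     (\<forall>s. \<not> singular_point S v (c s) \<longrightarrow>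
        (\<exists>\<delta>>0. \<exists>\<tau>. \<tau> s = 0 \<and> strict_mono_on {s - \<delta><..<s + \<delta>} \<tau> \<and>
            continuous_on {s - \<delta><..<s + \<delta>} \<tau> \<and>
            (\<forall>u\<in>{s - \<delta><..<s + \<delta>}. c u = v (\<tau> u) (c s))))"

definition nontrivial_circuit :: "'a topology \<Rightarrow> (real \<Rightarrow> 'a \<Rightarrow> 'a) \<Rightarrow> 'a set \<Rightarrow> bool" where
  "nontrivial_circuit S v \<gamma> \<longleftrightarrow>
     periodic_orbit S v \<gamma> \<or>
     (\<exists>c. orientation_preserving_loop S v c \<and> \<gamma> = c ` {0..1} \<and>
        (\<nexists>p. \<gamma> = {p}) \<and>
        (\<exists>P \<Sigma>. finite P \<and> (\<forall>p\<in>P. singular_point S v p) \<and>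
               (\<forall>Orb\<in>\<Sigma>. separatrix S v Orb) \<and> \<gamma> = P \<union> \<Union>\<Sigma>))"

text \<open>\<open>I\<close> is an open transverse arc parametrised by the homeomorphism \<open>h\<close> from the open
  interval (0,1): the flow restricted to (-eps,eps) x I is a homeomorphism onto an open set
  (a flow box).\<close>
definition open_transverse_arc ::
  "'a topology \<Rightarrow> (real \<Rightarrow> 'a \<Rightarrow> 'a) \<Rightarrow> 'a set \<Rightarrow> (real \<Rightarrow> 'a) \<Rightarrow> bool" where
  "open_transverse_arc S v I h \<longleftrightarrow>
     I \<subseteq> topspace S \<and> h ` {0<..<1} = I \<and>
     homeomorphic_map (subtopology euclideanreal {0<..<1}) (subtopology S I) h \<and>
     (\<exists>\<epsilon>>0. \<exists>W. openin S W \<and>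
        homeomorphic_map (prod_topology (subtopology euclideanreal {-\<epsilon><..<\<epsilon>}) (subtopology S I))
                         (subtopology S W) (\<lambda>(t, y). v t y))"

definition first_return_time :: "(real \<Rightarrow> 'a \<Rightarrow> 'a) \<Rightarrow> 'a set \<Rightarrow> 'a \<Rightarrow> real \<Rightarrow> bool" where
  "first_return_time v I y \<tau> \<longleftrightarrow>
     y \<in> I \<and> \<tau> > 0 \<and> v \<tau> y \<in> I \<and> (\<forall>t. 0 < t \<and> t < \<tau> \<longrightarrow> v t y \<notin> I)"

definition first_return_dom :: "(real \<Rightarrow> 'a \<Rightarrow> 'a) \<Rightarrow> 'a set \<Rightarrow> 'a set" where
  "first_return_dom v I = {y. \<exists>\<tau>. first_return_time v I y \<tau>}"

definition first_return :: "(real \<Rightarrow> 'a \<Rightarrow> 'a) \<Rightarrow> 'a set \<Rightarrow> 'a \<Rightarrow> 'a" where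
  "first_return v I y = v (THE \<tau>. first_return_time v I y \<tau>) y"

definition orientation_reversing_return ::
  "(real \<Rightarrow> 'a \<Rightarrow> 'a) \<Rightarrow> 'a set \<Rightarrow> (real \<Rightarrow> 'a) \<Rightarrow> bool" where
  "orientation_reversing_return v I h \<longleftrightarrow>
     (\<forall>a b a' b'. a \<in> {0<..<1} \<and> b \<in> {0<..<1} \<and> a' \<in> {0<..<1} \<and> b' \<in> {0<..<1} \<and>
        h a \<in> first_return_dom v I \<and> h b \<in> first_return_dom v I \<and>
        first_return v I (h a) = h a' \<and> first_return v I (h b) = h b' \<and> a < b \<longrightarrow> b' < a')"

definition wandering_holonomy :: "'a topology \<Rightarrow> (real \<Rightarrow> 'a \<Rightarrow> 'a) \<Rightarrow> 'a set \<Rightarrow> bool" where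
  "wandering_holonomy S v \<gamma> \<longleftrightarrow>
     nontrivial_circuit S v \<gamma> \<and>
     (\<exists>x\<in>\<gamma>. \<not> singular_point S v x \<and>
        (\<forall>U. openin S U \<and> x \<in> U \<longrightarrow>
           (\<exists>I h. I \<subseteq> U \<and> x \<in> I \<and> open_transverse_arc S v I h \<and>
                  orientation_reversing_return v I h \<and>
                  first_return_dom v I \<noteq> {} \<and>
                  first_return_dom v I \<inter> first_return v I ` first_return_dom v I = {})))"

end

theory Submission
  imports Defs
begin

text \<open>Take \<open>x \<in> \<gamma>\<close> with arbitrarily small transverse arcs whose first return maps have
  nonempty domain disjoint from their image. Such an arc contains no periodic point: a periodic
  point would return, and so would its first return. Hence neither does its flow box, an open
  neighbourhood of \<open>x\<close> missing \<open>Cl(v)\<close>; in particular \<open>\<gamma>\<close> is not a periodic orbit. A small arc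
  inside the middle half of the flow box cannot return before half the box height, for a
  quicker return stays on one orbit segment of the box, which a transverse arc meets only once.
  Since \<open>x\<close> is not periodic it has a neighbourhood that does not come back within a given bounded
  time window beyond that height, so small arcs in it return only after arbitrarily long
  times, and \<open>x\<close> is non-wandering.\<close>

lemma flow_in_topspace: "flow S v \<Longrightarrow> x \<in> topspace S \<Longrightarrow> v t x \<in> topspace S"
  unfolding flow_def continuous_map_def by (auto simp: Pi_iff)

lemma flow_add: "flow S v \<Longrightarrow> x \<in> topspace S \<Longrightarrow> v (s + t) x = v s (v t x)"
  unfolding flow_def by auto

lemma flow_zero: "flow S v \<Longrightarrow> x \<in> topspace S \<Longrightarrow> v 0 x = x"
  unfolding flow_def by auto

lemma flow_commute: "flow S v \<Longrightarrow> x \<in> topspace S \<Longrightarrow> v s (v t x) = v t (v s x)"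
  by (metis add.commute flow_add)

lemma flow_periodic_along_orbit:
  assumes "flow S v" "x \<in> topspace S" "v T x = x"
  shows "v T (v s x) = v s x"
  using assms by (metis flow_commute)

lemma periodic_orbit_imp_periodic:
  assumes "flow S v" "periodic_orbit S v \<gamma>" "x \<in> \<gamma>"
  obtains T where "T > 0" "v T x = x"
proof -
  obtain x0 T where "x0 \<in> topspace S" "T > 0" "v T x0 = x0" "\<gamma> = orbit v x0"
    using assms(2) unfolding periodic_orbit_def periodic_point_def by blast
  with assms that show ?thesis
    unfolding orbit_def by (auto intro: flow_periodic_along_orbit)
qed

lemma nontrivial_circuit_subset_topspace:
  assumes "flow S v" "nontrivial_circuit S v \<gamma>"
  shows "\<gamma> \<subseteq> topspace S"
  using assms(2) unfolding nontrivial_circuit_def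
proof (elim disjE exE conjE)
  assume "periodic_orbit S v \<gamma>"
  then show ?thesis
    using flow_in_topspace[OF assms(1)]
    unfolding periodic_orbit_def periodic_point_def orbit_def by auto
next
  fix c assume "orientation_preserving_loop S v c" "\<gamma> = c ` {0..1}"
  then show ?thesis
    unfolding orientation_preserving_loop_def
    using continuous_map_image_subset_topspace by fastforce
qed

definition disjoint_first_return :: "(real \<Rightarrow> 'a \<Rightarrow> 'a) \<Rightarrow> 'a set \<Rightarrow> bool" where
  "disjoint_first_return v I \<longleftrightarrow>
     first_return_dom v I \<inter> first_return v I ` first_return_dom v I = {}"

definition flow_box ::
  "'a topology \<Rightarrow> (real \<Rightarrow> 'a \<Rightarrow> 'a) \<Rightarrow> 'a set \<Rightarrow> real \<Rightarrow> 'a set \<Rightarrow> ('a \<Rightarrow> real) \<Rightarrow> ('a \<Rightarrow> 'a) \<Rightarrow> bool"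
  where
  "flow_box S v I \<epsilon> W \<tau> \<pi> \<longleftrightarrow> \<epsilon> > 0 \<and> I \<subseteq> topspace S \<and> openin S W \<and>
     (\<forall>s\<in>{-\<epsilon><..<\<epsilon>}. \<forall>j\<in>I. v s j \<in> W \<and> \<tau> (v s j) = s \<and> \<pi> (v s j) = j) \<and>
     (\<forall>w\<in>W. \<tau> w \<in> {-\<epsilon><..<\<epsilon>} \<and> \<pi> w \<in> I \<and> v (\<tau> w) (\<pi> w) = w) \<and>
     continuous_map (subtopology S W) euclideanreal \<tau> \<and>
     continuous_map (subtopology S W) (subtopology S I) \<pi>"

lemma open_transverse_arc_flow_box:
  assumes "open_transverse_arc S v I h"
  obtains \<epsilon> W \<tau> \<pi> where "flow_box S v I \<epsilon> W \<tau> \<pi>"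
proof -
  obtain \<epsilon> W where \<epsilon>: "\<epsilon> > 0" and W: "openin S W" and I: "I \<subseteq> topspace S" and
    "homeomorphic_map (prod_topology (subtopology euclideanreal {-\<epsilon><..<\<epsilon>}) (subtopology S I))
                      (subtopology S W) (\<lambda>(t, y). v t y)"
    using assms unfolding open_transverse_arc_def by blast
  then obtain g where g: "homeomorphic_maps
      (prod_topology (subtopology euclideanreal {-\<epsilon><..<\<epsilon>}) (subtopology S I))
      (subtopology S W) (\<lambda>(t, y). v t y) g"
    using homeomorphic_map_maps by blast
  have WS: "W \<subseteq> topspace S" using W openin_subset by blast
  have g_maps: "continuous_map (subtopology S W)
      (prod_topology (subtopology euclideanreal {-\<epsilon><..<\<epsilon>}) (subtopology S I)) g"
    and f_maps: "continuous_map
      (prod_topology (subtopology euclideanreal {-\<epsilon><..<\<epsilon>}) (subtopology S I))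
      (subtopology S W) (\<lambda>(t, y). v t y)"
    and g_f: "\<And>s j. s \<in> {-\<epsilon><..<\<epsilon>} \<Longrightarrow> j \<in> I \<Longrightarrow> g (v s j) = (s, j)"
    and f_g: "\<And>w. w \<in> W \<Longrightarrow> v (fst (g w)) (snd (g w)) = w"
    using g I WS unfolding homeomorphic_maps_def by (auto simp: case_prod_beta)
  have f_in: "v s j \<in> W" if "s \<in> {-\<epsilon><..<\<epsilon>}" "j \<in> I" for s j
    using continuous_map_funspace[OF f_maps] that I WS by (fastforce simp: Pi_iff)
  have g_in: "g w \<in> {-\<epsilon><..<\<epsilon>} \<times> I" if "w \<in> W" for w
  proof -
    have "w \<in> topspace (subtopology S W)" using that WS by auto
    then have "g w \<in> topspace (prod_topology (subtopology euclideanreal {-\<epsilon><..<\<epsilon>}) (subtopology S I))"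
      using continuous_map_funspace[OF g_maps] by blast
    then show ?thesis using I by (simp add: Int_absorb1)
  qed
  have "flow_box S v I \<epsilon> W (fst \<circ> g) (snd \<circ> g)"
    unfolding flow_box_def
  proof (intro conjI ballI)
    show "continuous_map (subtopology S W) euclideanreal (fst \<circ> g)"
      using continuous_map_compose[OF g_maps continuous_map_fst]
      by (simp add: continuous_map_in_subtopology)
    show "continuous_map (subtopology S W) (subtopology S I) (snd \<circ> g)"
      using continuous_map_compose[OF g_maps continuous_map_snd] .
  qed (use \<epsilon> I W f_in g_in g_f f_g in \<open>auto simp: mem_Times_iff\<close>)
  then show ?thesis by (rule that)
qed

lemma open_transverse_arc_no_small_return:
  assumes "flow S v" "open_transverse_arc S v I h"
  obtains \<epsilon> where "\<epsilon> > 0" "\<And>y t. y \<in> I \<Longrightarrow> v t y \<in> I \<Longrightarrow> \<bar>t\<bar> < \<epsilon> \<Longrightarrow> t = 0"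
proof -
  obtain \<epsilon> W \<tau> \<pi> where box: "flow_box S v I \<epsilon> W \<tau> \<pi>"
    using open_transverse_arc_flow_box[OF assms(2)] .
  have "t = 0" if "y \<in> I" "v t y \<in> I" "\<bar>t\<bar> < \<epsilon>" for y t
  proof -
    have "\<tau> (v t y) = t" using box that unfolding flow_box_def by (auto simp: abs_less_iff)
    moreover have "\<tau> (v 0 (v t y)) = 0" using box that unfolding flow_box_def by auto
    moreover have "v 0 (v t y) = v t y"
      using box that flow_zero[OF assms(1)] unfolding flow_box_def by auto
    ultimately show ?thesis by simp
  qed
  with box show ?thesis using that unfolding flow_box_def by blast
qed

lemma first_return_time_unique:
  "first_return_time v I y a \<Longrightarrow> first_return_time v I y b \<Longrightarrow> a = b"
  unfolding first_return_time_def by (meson linorder_neqE_linordered_idom)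

lemma first_return_eq: "first_return_time v I y \<tau> \<Longrightarrow> first_return v I y = v \<tau> y"
  unfolding first_return_def using first_return_time_unique by (metis the_equality)

lemma first_return_time_exists:
  assumes fl: "flow S v" and arc: "open_transverse_arc S v I h"
    and y: "y \<in> I" "t0 > 0" "v t0 y \<in> I"
  obtains \<tau> where "first_return_time v I y \<tau>"
proof -
  obtain \<epsilon> where "\<epsilon> > 0" and sep: "\<And>y t. y \<in> I \<Longrightarrow> v t y \<in> I \<Longrightarrow> \<bar>t\<bar> < \<epsilon> \<Longrightarrow> t = 0"
    using open_transverse_arc_no_small_return[OF fl arc] by blast
  have I: "I \<subseteq> topspace S" using arc unfolding open_transverse_arc_def by blast
  define R where "R = {t. 0 < t \<and> t \<le> t0 \<and> v t y \<in> I}"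
  define \<tau> where "\<tau> = Inf R"
  have "R \<noteq> {}" using y unfolding R_def by auto
  have bdd: "bdd_below R" unfolding R_def by (rule bdd_belowI[of _ 0]) auto
  then have le: "\<tau> \<le> t" if "t \<in> R" for t
    using cInf_lower[OF that] unfolding \<tau>_def by simp
  have "\<tau> \<in> R"
  proof (rule ccontr)
    assume "\<tau> \<notin> R"
    \<comment> \<open>otherwise two elements of \<open>R\<close> lie within \<open>\<epsilon>\<close> of each other, contradicting \<open>sep\<close>\<close>
    obtain t1 where t1: "t1 \<in> R" "t1 < \<tau> + \<epsilon>"
      using cInf_lessD[OF \<open>R \<noteq> {}\<close>, of "\<tau> + \<epsilon>"] \<open>\<epsilon> > 0\<close> \<tau>_def by auto
    with \<open>\<tau> \<notin> R\<close> le have "\<tau> < t1" by (metis le_less)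
    then obtain t2 where t2: "t2 \<in> R" "t2 < t1"
      using cInf_lessD[OF \<open>R \<noteq> {}\<close>, of t1] \<tau>_def by auto
    with \<open>\<tau> \<notin> R\<close> le have "\<tau> < t2" by (metis le_less)
    have "y \<in> topspace S" using y I by auto
    then have "v (t1 - t2) (v t2 y) \<in> I"
      using t1 flow_add[OF fl, of y "t1 - t2" t2] unfolding R_def by simp
    then have "t1 - t2 = 0"
      using sep[of "v t2 y" "t1 - t2"] t1 t2 \<open>\<tau> < t2\<close> unfolding R_def by auto
    with t2 show False by simp
  qed
  then have "\<tau> > 0" "\<tau> \<le> t0" "v \<tau> y \<in> I" unfolding R_def by auto
  moreover have "v t y \<notin> I" if "0 < t" "t < \<tau>" for t
  proof
    assume "v t y \<in> I"
    with that \<open>\<tau> \<le> t0\<close> have "t \<in> R" unfolding R_def by simp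
    with le that show False by fastforce
  qed
  ultimately show ?thesis using that y(1) unfolding first_return_time_def by blast
qed

text \<open>A periodic point \<open>y\<close> of the arc returns, and so does its first return \<open>v \<tau> y\<close>.\<close>
lemma periodic_point_in_arc_not_disjoint_first_return:
  assumes fl: "flow S v" and arc: "open_transverse_arc S v I h"
    and y: "y \<in> I" "T > 0" "v T y = y"
  shows "\<not> disjoint_first_return v I"
proof -
  have I: "I \<subseteq> topspace S" using arc unfolding open_transverse_arc_def by blast
  obtain \<tau> where \<tau>: "first_return_time v I y \<tau>"
    using first_return_time_exists[OF fl arc y(1,2)] y by auto
  then have "y \<in> first_return_dom v I" unfolding first_return_dom_def by auto
  then have z: "v \<tau> y \<in> I" "v \<tau> y \<in> first_return v I ` first_return_dom v I"
    using \<tau> first_return_eq[OF \<tau>] unfolding first_return_time_def by (metis image_eqI)+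
  have "v T (v \<tau> y) = v \<tau> y"
    using flow_periodic_along_orbit[OF fl _ y(3)] y(1) I by auto
  then obtain \<tau>' where "first_return_time v I (v \<tau> y) \<tau>'"
    using first_return_time_exists[OF fl arc z(1) y(2)] z(1) by auto
  then have "v \<tau> y \<in> first_return_dom v I" unfolding first_return_dom_def by auto
  with z show ?thesis unfolding disjoint_first_return_def by auto
qed

lemma flow_box_no_periodic_point:
  assumes fl: "flow S v" and arc: "open_transverse_arc S v I h" and "disjoint_first_return v I"
    and box: "flow_box S v I \<epsilon> W \<tau> \<pi>" and z: "z \<in> W" "T > 0" "v T z = z"
  shows False
proof -
  have \<pi>: "\<pi> z \<in> I" "v (\<tau> z) (\<pi> z) = z" and "I \<subseteq> topspace S"
    using box z(1) unfolding flow_box_def by auto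
  then have "\<pi> z \<in> topspace S" by auto
  then have "v (- \<tau> z) z = \<pi> z"
    using \<pi>(2) flow_add[OF fl, of "\<pi> z" "- \<tau> z" "\<tau> z"] flow_zero[OF fl] by auto
  moreover have "z \<in> topspace S"
    using box z(1) openin_subset unfolding flow_box_def by blast
  ultimately have "v T (\<pi> z) = \<pi> z"
    using flow_periodic_along_orbit[OF fl _ z(3)] by metis
  then show False
    using periodic_point_in_arc_not_disjoint_first_return[OF fl arc \<pi>(1) z(2)] assms(3) by blast
qed

lemma flow_box_mem:
  assumes fl: "flow S v" and box: "flow_box S v I \<epsilon> W \<tau> \<pi>" and "x \<in> I"
  shows "x \<in> W" "\<tau> x = 0" "\<pi> x = x"
proof -
  have "v 0 x = x" using box \<open>x \<in> I\<close> flow_zero[OF fl] unfolding flow_box_def by auto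
  moreover have "v 0 x \<in> W" "\<tau> (v 0 x) = 0" "\<pi> (v 0 x) = x"
    using box \<open>x \<in> I\<close> unfolding flow_box_def by auto
  ultimately show "x \<in> W" "\<tau> x = 0" "\<pi> x = x" by simp_all
qed

lemma Cl_imp_periodic:
  assumes "z \<in> Cl S v"
  obtains T where "T > 0" "v T z = z"
proof (cases "singular_point S v z")
  case True
  then show ?thesis using that[of 1] unfolding singular_point_def by simp
next
  case False
  then show ?thesis using assms that unfolding Cl_def periodic_point_def by blast
qed

lemma disjoint_first_return_notin_closure_Cl:
  assumes fl: "flow S v" and arc: "open_transverse_arc S v I h" and "disjoint_first_return v I"
    and "x \<in> I"
  shows "x \<notin> S closure_of Cl S v"
proof
  obtain \<epsilon> W \<tau> \<pi> where box: "flow_box S v I \<epsilon> W \<tau> \<pi>"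
    using open_transverse_arc_flow_box[OF arc] .
  have "x \<in> W" "openin S W"
    using flow_box_mem[OF fl box \<open>x \<in> I\<close>] box unfolding flow_box_def by auto
  moreover assume "x \<in> S closure_of Cl S v"
  ultimately obtain z where "z \<in> Cl S v" "z \<in> W" unfolding in_closure_of by blast
  moreover obtain T where "T > 0" "v T z = z"
    by (rule Cl_imp_periodic[OF \<open>z \<in> Cl S v\<close>])
  ultimately show False
    using flow_box_no_periodic_point[OF fl arc assms(3) box] by blast
qed

lemma locally_injective_no_interior_max:
  fixes g :: "real \<Rightarrow> real"
  assumes cont: "continuous_on {a..b} g" and c: "c \<in> {a<..<b}" and "r > 0"
    and inj: "inj_on g (ball c r \<inter> {a..b})" and max: "\<forall>d\<in>{a..b}. g d \<le> g c"
  shows False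
proof -
  define d1 d2 where "d1 = max a (c - r/2)" and "d2 = min b (c + r/2)"
  have d: "a \<le> d1" "d1 < c" "c < d2" "d2 \<le> b"
    using c \<open>r > 0\<close> unfolding d1_def d2_def by auto
  have ball: "{d1..d2} \<subseteq> ball c r \<inter> {a..b}"
    using d \<open>r > 0\<close> unfolding d1_def d2_def by (auto simp: dist_real_def)
  have inj': "inj_on g {d1..d2}" using inj_on_subset[OF inj ball] .
  have cont': "continuous_on {d1..d2} g" using continuous_on_subset[OF cont] ball by blast
  have "g d1 \<noteq> g c" "g d2 \<noteq> g c"
    using inj_onD[OF inj', of d1 c] inj_onD[OF inj', of d2 c] d by auto
  moreover have "g d1 \<le> g c" "g d2 \<le> g c" using max d c by auto
  ultimately have less: "g d1 < g c" "g d2 < g c" by auto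
  \<comment> \<open>by the intermediate value theorem the lower of the two values is taken again on the other side of \<open>c\<close>\<close>
  have cont1: "continuous_on {d1..c} g" and cont2: "continuous_on {c..d2} g"
    using continuous_on_subset[OF cont'] d by auto
  show False
  proof (cases "g d1 \<le> g d2")
    case True
    have "\<exists>e. d1 \<le> e \<and> e \<le> c \<and> g e = g d2"
      using True less d cont1 by (intro IVT') auto
    then obtain e where "d1 \<le> e" "e \<le> c" "g e = g d2" by blast
    then show False using inj_onD[OF inj', of e d2] d by auto
  next
    case False
    have "\<exists>e. c \<le> e \<and> e \<le> d2 \<and> g e = g d1"
      using False less d cont2 by (intro IVT2') auto
    then obtain e where "c \<le> e" "e \<le> d2" "g e = g d1" by blast
    then show False using inj_onD[OF inj', of e d1] d by auto
  qed
qed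

lemma continuous_locally_injective_endpoints_distinct:
  fixes g :: "real \<Rightarrow> real"
  assumes "a < b" and cont: "continuous_on {a..b} g"
    and loc: "\<And>c. c \<in> {a<..<b} \<Longrightarrow> \<exists>r>0. inj_on g (ball c r \<inter> {a..b})"
  shows "g a \<noteq> g b"
proof
  assume eq: "g a = g b"
  have no_max: "\<not> (\<forall>d\<in>{a..b}. g d \<le> g c)" if "c \<in> {a<..<b}" for c
    using loc[OF that] locally_injective_no_interior_max[OF cont that] by blast
  have no_min: "\<not> (\<forall>d\<in>{a..b}. g c \<le> g d)" if c: "c \<in> {a<..<b}" for c
  proof
    have "continuous_on {a..b} (\<lambda>x. - g x)" using cont by (intro continuous_intros)
    moreover obtain r where "r > 0" "inj_on (\<lambda>x. - g x) (ball c r \<inter> {a..b})"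
      using loc[OF c] by (auto simp: inj_on_def)
    moreover assume "\<forall>d\<in>{a..b}. g c \<le> g d"
    then have "\<forall>d\<in>{a..b}. - g d \<le> - g c" by simp
    ultimately show False using locally_injective_no_interior_max[OF _ c] by blast
  qed
  obtain cM where cM: "cM \<in> {a..b}" "\<forall>d\<in>{a..b}. g d \<le> g cM"
    using continuous_attains_sup[of "{a..b}" g] cont \<open>a < b\<close> by auto
  obtain cm where cm: "cm \<in> {a..b}" "\<forall>d\<in>{a..b}. g cm \<le> g d"
    using continuous_attains_inf[of "{a..b}" g] cont \<open>a < b\<close> by auto
  have "cM \<notin> {a<..<b}" "cm \<notin> {a<..<b}" using no_max no_min cM(2) cm(2) by blast+
  then have "cM = a \<or> cM = b" "cm = a \<or> cm = b" using cM(1) cm(1) by auto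
  then have "g cM = g a" "g cm = g a" using eq by auto
  \<comment> \<open>so \<open>g\<close> is constant and every interior point is a maximum\<close>
  define m where "m = (a + b) / 2"
  have "m \<in> {a<..<b}" using \<open>a < b\<close> unfolding m_def by auto
  moreover have "g d \<le> g m" if "d \<in> {a..b}" for d
  proof -
    have "g d \<le> g cM" using cM(2) that by blast
    also have "\<dots> = g cm" using \<open>g cM = g a\<close> \<open>g cm = g a\<close> by simp
    also have "\<dots> \<le> g m" using cm(2) \<open>m \<in> {a<..<b}\<close> by simp
    finally show ?thesis .
  qed
  ultimately show False using no_max by blast
qed

lemma continuous_locally_injective_imp_inj_on:
  fixes g :: "real \<Rightarrow> real"
  assumes "connected A" and cont: "continuous_on A g"
    and loc: "\<And>c. c \<in> A \<Longrightarrow> \<exists>r>0. inj_on g (ball c r \<inter> A)"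
  shows "inj_on g A"
proof -
  have "g x \<noteq> g y" if "x \<in> A" "y \<in> A" "x < y" for x y
  proof (rule continuous_locally_injective_endpoints_distinct[OF \<open>x < y\<close>])
    have sub: "{x..y} \<subseteq> A" using connected_contains_Icc[OF \<open>connected A\<close> that(1,2)] .
    show "continuous_on {x..y} g" using continuous_on_subset[OF cont sub] .
    fix c assume "c \<in> {x<..<y}"
    then have "c \<in> A" using sub by auto
    then obtain r where "r > 0" "inj_on g (ball c r \<inter> A)" using loc by blast
    then show "\<exists>r>0. inj_on g (ball c r \<inter> {x..y})" using sub by (blast intro: inj_on_subset)
  qed
  then show ?thesis
    by (intro inj_onI) (metis linorder_neqE_linordered_idom)
qed

lemma flow_box_same_projection:
  assumes fl: "flow S v" and box: "flow_box S v I \<epsilon> W \<tau> \<pi>"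
    and "p \<in> W" "q \<in> W" "\<pi> p = \<pi> q"
  shows "p = v (\<tau> p - \<tau> q) q"
proof -
  have "\<pi> q \<in> topspace S" and p: "v (\<tau> p) (\<pi> q) = p" and q: "v (\<tau> q) (\<pi> q) = q"
    using box assms(3-5) unfolding flow_box_def by auto
  have "v (\<tau> p - \<tau> q) q = v (\<tau> p - \<tau> q) (v (\<tau> q) (\<pi> q))" by (simp only: q)
  also have "\<dots> = v (\<tau> p) (\<pi> q)"
    using flow_add[OF fl \<open>\<pi> q \<in> topspace S\<close>, of "\<tau> p - \<tau> q" "\<tau> q"] by simp
  finally show ?thesis using p by simp
qed

lemma flow_box_no_short_return:
  assumes fl: "flow S v" and box: "flow_box S v I \<epsilon> W \<tau> \<pi>" and inj: "inj_on \<pi> J"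
    and J: "J \<subseteq> {w \<in> W. \<bar>\<tau> w\<bar> < \<epsilon> / 2}"
    and y: "y \<in> J" "0 < t" "t < \<epsilon> / 2" "v t y \<in> J"
  shows "v t y = y"
proof -
  have "y \<in> W" "\<bar>\<tau> y\<bar> < \<epsilon> / 2" using J y(1) by auto
  then have "\<pi> y \<in> I" "v (\<tau> y) (\<pi> y) = y" "\<pi> y \<in> topspace S"
    using box unfolding flow_box_def by auto
  then have "v t y = v (t + \<tau> y) (\<pi> y)"
    using flow_add[OF fl \<open>\<pi> y \<in> topspace S\<close>, of t "\<tau> y"] by simp
  moreover have "t + \<tau> y \<in> {-\<epsilon><..<\<epsilon>}" using \<open>\<bar>\<tau> y\<bar> < \<epsilon> / 2\<close> y(2,3) by auto
  ultimately have "\<pi> (v t y) = \<pi> y" using box \<open>\<pi> y \<in> I\<close> unfolding flow_box_def by auto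
  then show ?thesis using inj_onD[OF inj] y(1,4) by blast
qed

lemma flow_box_projection_inj_on_arc:
  assumes fl: "flow S v" and arc0: "open_transverse_arc S v I0 h0"
    and box: "flow_box S v I0 \<epsilon> W \<tau> \<pi>"
    and arc: "open_transverse_arc S v J h" and "J \<subseteq> W"
  shows "inj_on \<pi> J"
proof -
  obtain k where k: "homeomorphic_maps (top_of_set {0<..<1}) (subtopology S I0) h0 k"
    using arc0 homeomorphic_map_maps unfolding open_transverse_arc_def by blast
  have I0: "I0 \<subseteq> topspace S" using box unfolding flow_box_def by blast
  then have h0_k: "h0 (k w) = w" if "w \<in> I0" for w
    using k that unfolding homeomorphic_maps_def by auto
  have J: "J \<subseteq> topspace S" "h ` {0<..<1} = J"
    and hh: "homeomorphic_map (top_of_set {0<..<1}) (subtopology S J) h"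
    using arc unfolding open_transverse_arc_def by blast+
  have h_inj: "inj_on h {0<..<1}" using homeomorphic_imp_injective_map[OF hh] by simp
  obtain \<epsilon>J where "\<epsilon>J > 0" and sep: "\<And>y t. y \<in> J \<Longrightarrow> v t y \<in> J \<Longrightarrow> \<bar>t\<bar> < \<epsilon>J \<Longrightarrow> t = 0"
    using open_transverse_arc_no_small_return[OF fl arc] by blast
  have "continuous_map (top_of_set {0<..<1}) S h"
    using homeomorphic_imp_continuous_map[OF hh] continuous_map_in_subtopology by blast
  then have h_W: "continuous_map (top_of_set {0<..<1}) (subtopology S W) h"
    using J(2) \<open>J \<subseteq> W\<close> by (auto simp: continuous_map_in_subtopology)
  have k_cont: "continuous_map (subtopology S I0) euclideanreal k"
    using k unfolding homeomorphic_maps_def continuous_map_in_subtopology by blast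
  have \<tau>_cont: "continuous_map (subtopology S W) euclideanreal \<tau>"
    and \<pi>_cont: "continuous_map (subtopology S W) (subtopology S I0) \<pi>"
    using box unfolding flow_box_def by auto
  define T where "T = \<tau> \<circ> h"
  define \<kappa> where "\<kappa> = k \<circ> \<pi> \<circ> h"
  have cont_T: "continuous_on {0<..<1} T"
    using continuous_map_compose[OF h_W \<tau>_cont] unfolding T_def by simp
  have cont_\<kappa>: "continuous_on {0<..<1} \<kappa>"
    using continuous_map_compose[OF continuous_map_compose[OF h_W \<pi>_cont] k_cont]
    unfolding \<kappa>_def by (simp add: o_assoc)
  \<comment> \<open>\<open>\<kappa> d\<close> locates on \<open>I0\<close> the orbit through \<open>h d\<close>; near \<open>c\<close> the flow-box times \<open>T\<close> differ by
    less than \<open>\<epsilon>J\<close>, so transversality of \<open>J\<close> makes \<open>\<kappa>\<close> locally injective\<close>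
  have loc: "\<exists>r>0. inj_on \<kappa> (ball c r \<inter> {0<..<1})" if c: "c \<in> {0<..<1}" for c
  proof -
    have "\<epsilon>J / 2 > 0" using \<open>\<epsilon>J > 0\<close> by simp
    then obtain r where "r > 0" and r: "\<forall>d\<in>{0<..<1}. dist d c < r \<longrightarrow> dist (T d) (T c) < \<epsilon>J / 2"
      using continuous_on_iff[THEN iffD1, OF cont_T, rule_format, OF c] by blast
    have "d = d'" if d: "d \<in> ball c r \<inter> {0<..<1}" "d' \<in> ball c r \<inter> {0<..<1}" "\<kappa> d = \<kappa> d'"
      for d d'
    proof -
      have mem: "h d \<in> J" "h d' \<in> J" using d J by auto
      then have "\<pi> (h d) \<in> I0" "\<pi> (h d') \<in> I0"
        using box \<open>J \<subseteq> W\<close> unfolding flow_box_def by auto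
      then have "\<pi> (h d) = h0 (\<kappa> d)" "\<pi> (h d') = h0 (\<kappa> d')"
        using h0_k unfolding \<kappa>_def by simp_all
      then have "\<pi> (h d) = \<pi> (h d')" using d(3) by simp
      then have hd: "h d = v (T d - T d') (h d')"
        using flow_box_same_projection[OF fl box] mem \<open>J \<subseteq> W\<close> unfolding T_def by auto
      have "dist (T d) (T c) < \<epsilon>J / 2" "dist (T d') (T c) < \<epsilon>J / 2"
        using r d by (auto simp: dist_commute)
      then have "\<bar>T d - T d'\<bar> < \<epsilon>J" unfolding dist_real_def by arith
      then have "T d = T d'" using sep[of "h d'" "T d - T d'"] mem hd by simp
      then have "h d = h d'" using hd flow_zero[OF fl] mem J(1) by auto
      then show "d = d'" using inj_onD[OF h_inj] d by auto
    qed
    then have "inj_on \<kappa> (ball c r \<inter> {0<..<1})" by (rule inj_onI)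
    with \<open>r > 0\<close> show ?thesis by blast
  qed
  have inj_\<kappa>: "inj_on \<kappa> {0<..<1}"
    using continuous_locally_injective_imp_inj_on[OF connected_Ioo cont_\<kappa> loc] .
  show ?thesis
  proof (rule inj_onI)
    fix p q assume "p \<in> J" "q \<in> J" "\<pi> p = \<pi> q"
    then obtain a b where ab: "a \<in> {0<..<1}" "b \<in> {0<..<1}" "p = h a" "q = h b"
      using J(2) by blast
    then have "\<kappa> a = \<kappa> b" using \<open>\<pi> p = \<pi> q\<close> unfolding \<kappa>_def by simp
    then show "p = q" using inj_onD[OF inj_\<kappa>, of a b] ab by simp
  qed
qed

lemma nonreturning_nbhd_at_time:
  assumes H: "Hausdorff_space S" and fl: "flow S v" and x: "x \<in> topspace S" and "v t x \<noteq> x"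
  obtains D C where "open D" "t \<in> D" "openin S C" "x \<in> C" "\<And>s y. s \<in> D \<Longrightarrow> y \<in> C \<Longrightarrow> v s y \<notin> C"
proof -
  have "\<exists>A B. openin S A \<and> openin S B \<and> v t x \<in> A \<and> x \<in> B \<and> disjnt A B"
    using H flow_in_topspace[OF fl x] x \<open>v t x \<noteq> x\<close> unfolding Hausdorff_space_def by blast
  then obtain A B where AB: "openin S A" "openin S B" "v t x \<in> A" "x \<in> B" "disjnt A B"
    by blast
  have cm: "continuous_map (prod_topology euclideanreal S) S (\<lambda>(t, x). v t x)"
    using fl unfolding flow_def by blast
  define P where "P = {p \<in> topspace (prod_topology euclideanreal S). (\<lambda>(t, x). v t x) p \<in> A}"
  have "openin (prod_topology euclideanreal S) P"
    unfolding P_def by (rule openin_continuous_map_preimage[OF cm AB(1)])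
  moreover have "(t, x) \<in> P" unfolding P_def using x AB(3) by simp
  ultimately obtain D C where DC: "openin euclideanreal D" "openin S C" "t \<in> D" "x \<in> C" "D \<times> C \<subseteq> P"
    unfolding openin_prod_topology_alt by metis
  show ?thesis
  proof (rule that[of D "C \<inter> B"])
    show "open D" using DC(1) by simp
    show "t \<in> D" "x \<in> C \<inter> B" using DC(3,4) AB(4) by simp_all
    show "openin S (C \<inter> B)" using DC(2) AB(2) by (rule openin_Int)
    fix s y assume "s \<in> D" "y \<in> C \<inter> B"
    then have "(s, y) \<in> P" using DC(5) by blast
    then have "v s y \<in> A" unfolding P_def by simp
    then show "v s y \<notin> C \<inter> B" using AB(5) unfolding disjnt_def by blast
  qed
qed

lemma nonreturning_nbhd:
  assumes H: "Hausdorff_space S" and fl: "flow S v" and x: "x \<in> topspace S"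
    and np: "\<And>t. t \<in> {a..b} \<Longrightarrow> v t x \<noteq> x"
  obtains V where "openin S V" "x \<in> V" "\<And>y t. y \<in> V \<Longrightarrow> t \<in> {a..b} \<Longrightarrow> v t y \<notin> V"
proof -
  have "\<forall>t\<in>{a..b}. \<exists>D C. open D \<and> t \<in> D \<and> openin S C \<and> x \<in> C \<and> (\<forall>s\<in>D. \<forall>y\<in>C. v s y \<notin> C)"
  proof
    fix t assume "t \<in> {a..b}"
    obtain D C where "open D" "t \<in> D" "openin S C" "x \<in> C" "\<And>s y. s \<in> D \<Longrightarrow> y \<in> C \<Longrightarrow> v s y \<notin> C"
      using nonreturning_nbhd_at_time[OF H fl x np[OF \<open>t \<in> {a..b}\<close>]] by blast
    then show "\<exists>D C. open D \<and> t \<in> D \<and> openin S C \<and> x \<in> C \<and> (\<forall>s\<in>D. \<forall>y\<in>C. v s y \<notin> C)"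
      by blast
  qed
  then obtain D C where OC: "\<forall>t\<in>{a..b}.
      open (D t) \<and> t \<in> D t \<and> openin S (C t) \<and> x \<in> C t \<and> (\<forall>s\<in>D t. \<forall>y\<in>C t. v s y \<notin> C t)"
    by (metis bchoice)
  have "{a..b} \<subseteq> (\<Union>t\<in>{a..b}. D t)" using OC by blast
  then obtain K where K: "K \<subseteq> {a..b}" "finite K" "{a..b} \<subseteq> (\<Union>t\<in>K. D t)"
    using compactE_image[OF compact_Icc, of "{a..b}" D] OC by blast
  define V where "V = (\<Inter>t\<in>K. C t) \<inter> topspace S"
  have "openin S V" unfolding V_def using K OC by (intro openin_INT) auto
  moreover have "x \<in> V" unfolding V_def using K OC x by auto
  moreover have "v t y \<notin> V" if y: "y \<in> V" and t: "t \<in> {a..b}" for y t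
  proof -
    obtain k where k: "k \<in> K" "t \<in> D k" using K(3) t by blast
    then have "v t y \<notin> C k" using OC K(1) y unfolding V_def by blast
    then show ?thesis using k(1) unfolding V_def by blast
  qed
  ultimately show ?thesis using that by blast
qed

lemma nonwandering_if_small_arcs_with_disjoint_returns:
  assumes H: "Hausdorff_space S" and fl: "flow S v" and x: "x \<in> topspace S"
    and arcs: "\<And>U. openin S U \<Longrightarrow> x \<in> U \<Longrightarrow> \<exists>I h. I \<subseteq> U \<and> x \<in> I \<and>
      open_transverse_arc S v I h \<and> first_return_dom v I \<noteq> {} \<and> disjoint_first_return v I"
  shows "x \<in> nonwandering S v"
proof -
  obtain I0 h0 where "x \<in> I0" and arc0: "open_transverse_arc S v I0 h0"
    and "disjoint_first_return v I0"
    using arcs[of "topspace S"] x by auto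
  obtain \<epsilon> W \<tau> \<pi> where box: "flow_box S v I0 \<epsilon> W \<tau> \<pi>"
    using open_transverse_arc_flow_box[OF arc0] .
  define W' where "W' = {w \<in> W. \<bar>\<tau> w\<bar> < \<epsilon> / 2}"
  have W: "openin S W" "continuous_map (subtopology S W) euclideanreal \<tau>" and "\<epsilon> > 0"
    using box unfolding flow_box_def by auto
  then have "W \<subseteq> topspace S" using openin_subset by blast
  then have "{w \<in> topspace (subtopology S W). \<tau> w \<in> {-\<epsilon>/2<..<\<epsilon>/2}} = W'"
    unfolding W'_def by (auto simp: abs_less_iff)
  moreover have "openin (subtopology S W) {w \<in> topspace (subtopology S W). \<tau> w \<in> {-\<epsilon>/2<..<\<epsilon>/2}}"
    using W(2) by (rule openin_continuous_map_preimage) auto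
  ultimately have "openin S W'" using openin_open_subtopology[OF W(1)] by auto
  have "x \<in> W'" using flow_box_mem[OF fl box \<open>x \<in> I0\<close>] \<open>\<epsilon> > 0\<close> unfolding W'_def by simp
  have "\<exists>t>N. \<exists>y\<in>U. v t y \<in> U" if "openin S U" "x \<in> U" for U N
  proof -
    have aperiodic: "v t x \<noteq> x" if "t \<in> {\<epsilon>/2..N}" for t
    proof
      assume "v t x = x"
      moreover have "t > 0" using that \<open>\<epsilon> > 0\<close> by simp
      ultimately show False
        using periodic_point_in_arc_not_disjoint_first_return[OF fl arc0 \<open>x \<in> I0\<close>]
          \<open>disjoint_first_return v I0\<close> by blast
    qed
    obtain V where V: "openin S V" "x \<in> V" "\<And>y t. y \<in> V \<Longrightarrow> t \<in> {\<epsilon>/2..N} \<Longrightarrow> v t y \<notin> V"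
      using nonreturning_nbhd[OF H fl x aperiodic] by blast
    have "openin S (U \<inter> W' \<inter> V)" "x \<in> U \<inter> W' \<inter> V"
      using \<open>openin S U\<close> \<open>x \<in> U\<close> \<open>openin S W'\<close> \<open>x \<in> W'\<close> V(1,2) by auto
    from arcs[OF this] obtain I h where I: "I \<subseteq> U \<inter> W' \<inter> V" "open_transverse_arc S v I h"
      "first_return_dom v I \<noteq> {}" "disjoint_first_return v I"
      by blast
    then obtain y t where "first_return_time v I y t" unfolding first_return_dom_def by blast
    then have y: "y \<in> I" "t > 0" "v t y \<in> I" unfolding first_return_time_def by auto
    have I_box: "I \<subseteq> {w \<in> W. \<bar>\<tau> w\<bar> < \<epsilon> / 2}" using I(1) unfolding W'_def by blast
    then have "inj_on \<pi> I" using flow_box_projection_inj_on_arc[OF fl arc0 box I(2)] by blast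
    \<comment> \<open>a return of \<open>I\<close> within the flow box would close up the orbit of \<open>y\<close>\<close>
    have "\<not> t < \<epsilon> / 2"
    proof
      assume "t < \<epsilon> / 2"
      with flow_box_no_short_return[OF fl box \<open>inj_on \<pi> I\<close> I_box y(1,2) _ y(3)]
      have "v t y = y" by blast
      then show False
        using periodic_point_in_arc_not_disjoint_first_return[OF fl I(2) y(1,2)] I(4) by blast
    qed
    moreover have "t \<notin> {\<epsilon>/2..N}" using V(3)[of y t] y I(1) by blast
    ultimately have "t > N" by auto
    then show ?thesis using y I(1) by blast
  qed
  then show ?thesis unfolding nonwandering_def using x by blast
qed

theorem mainTheorem6:
  fixes S :: "'a topology" and v :: "real \<Rightarrow> 'a \<Rightarrow> 'a" and \<gamma> :: "'a set"
  assumes "surface S" and "flow S v" and "wandering_holonomy S v \<gamma>"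
  shows "\<not> periodic_orbit S v \<gamma> \<and>
         (\<exists>x\<in>\<gamma>. x \<in> nonwandering S v - S closure_of (Cl S v))"
proof -
  have "\<exists>x\<in>\<gamma>. \<not> singular_point S v x \<and> (\<forall>U. openin S U \<and> x \<in> U \<longrightarrow> (\<exists>I h. I \<subseteq> U \<and>
      x \<in> I \<and> open_transverse_arc S v I h \<and> orientation_reversing_return v I h \<and>
      first_return_dom v I \<noteq> {} \<and> disjoint_first_return v I))"
    using assms(3) unfolding wandering_holonomy_def disjoint_first_return_def by (rule conjunct2)
  then obtain x where "x \<in> \<gamma>" and "\<forall>U. openin S U \<and> x \<in> U \<longrightarrow> (\<exists>I h. I \<subseteq> U \<and> x \<in> I \<and>
      open_transverse_arc S v I h \<and> orientation_reversing_return v I h \<and>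
      first_return_dom v I \<noteq> {} \<and> disjoint_first_return v I)"
    by blast
  then have arcs: "\<exists>I h. I \<subseteq> U \<and> x \<in> I \<and>
      open_transverse_arc S v I h \<and> first_return_dom v I \<noteq> {} \<and> disjoint_first_return v I"
    if "openin S U" "x \<in> U" for U
    using that by meson
  have "nontrivial_circuit S v \<gamma>" using assms(3) unfolding wandering_holonomy_def by (rule conjunct1)
  then have x: "x \<in> topspace S"
    using nontrivial_circuit_subset_topspace[OF assms(2)] \<open>x \<in> \<gamma>\<close> by blast
  obtain I h where arc: "x \<in> I" "open_transverse_arc S v I h" "disjoint_first_return v I"
    using arcs[OF openin_topspace x] by blast
  have "\<not> periodic_orbit S v \<gamma>"
  proof
    assume "periodic_orbit S v \<gamma>"
    then obtain T where "T > 0" "v T x = x"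
      using periodic_orbit_imp_periodic[OF assms(2) _ \<open>x \<in> \<gamma>\<close>] by blast
    then show False
      using periodic_point_in_arc_not_disjoint_first_return[OF assms(2) arc(2,1)] arc(3) by blast
  qed
  moreover have "x \<notin> S closure_of Cl S v"
    using disjoint_first_return_notin_closure_Cl[OF assms(2) arc(2,3,1)] .
  moreover have "Hausdorff_space S" using assms(1) unfolding surface_def by blast
  then have "x \<in> nonwandering S v"
    using nonwandering_if_small_arcs_with_disjoint_returns[OF _ assms(2) x arcs] by blast
  ultimately show ?thesis using \<open>x \<in> \<gamma>\<close> by blast
qed

end
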